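(* Let $D,\chi,\varepsilon>0$, $a\ge 0$, $\beta\ge 0$, $b=D\beta^2$. Then there are no $0<r_0<r_1$ and functions $\rho\in C^0[0,\infty)$, $\phi\in C^2[0,\infty)$ with $\rho\ge0$, $\phi(0)\ge0$, such that $\rho\equiv 0$ on $[0,r_0]\cup[r_1,\infty)$, $\rho>0$ on $(r_0,r_1)$, $\rho$ is symmetric about $(r_0+r_1)/2$ on $(r_0,r_1)$ (i.e. $\rho(r_0+s)=\rho(r_1-s)$ for $s\in(0,r_1-r_0)$), $\rho$ is differentiable on $(r_0,r_1)$ with $\varepsilon\rho\rho_r=\chi\rho\phi_r$ there, and $D\phi_{rr}+D\frac{\phi_r}{r}+a\rho-b\phi=0$ on $(0,\infty)$.
   Context: The system $\partial_r(\frac{\varepsilon}{2}\rho^2)=\chi\rho\phi_r$, $D\phi_{rr}+D\phi_r/r+a\rho-b\phi=0$ is the radially symmetric stationary form of a hyperbolic-parabolic chemotaxis model on $\mathbb{R}^2$ with pressure $p(\rho)=\frac{\varepsilon}{2}\rho^2$; $r=|x|$. *)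

theory Defs
  imports "HOL-Analysis.Analysis"
begin

definition C2_on_nonneg :: "(real \<Rightarrow> real) \<Rightarrow> (real \<Rightarrow> real) \<Rightarrow> (real \<Rightarrow> real) \<Rightarrow> bool" where
  "C2_on_nonneg f f1 f2 \<longleftrightarrow>
     (\<forall>x\<ge>0. (f has_real_derivative f1 x) (at x within {0..})) \<and>
     (\<forall>x\<ge>0. (f1 has_real_derivative f2 x) (at x within {0..})) \<and>
     continuous_on {0..} f2"

end

theory Submission
  imports Defs
begin

text \<open>On the support \<open>(r\<^sub>0, r\<^sub>1)\<close> the flux condition \<open>\<epsilon> \<rho>' = \<chi> \<phi>'\<close> makes
  \<open>\<rho> - (\<chi>/\<epsilon>) \<phi>\<close> constant, so the symmetry of \<open>\<rho>\<close> about the midpoint passes to \<open>\<phi>\<close>: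
  \<open>\<phi>\<close> and \<open>\<phi>''\<close> are even and \<open>\<phi>'\<close> is odd under \<open>r \<mapsto> r\<^sub>0 + r\<^sub>1 - r\<close>. Subtracting the
  equation for \<open>\<phi>\<close> at \<open>r\<close> and at its mirror point leaves \<open>D \<phi>'(r) (1/r + 1/(r\<^sub>0 + r\<^sub>1 - r)) = 0\<close>,
  because the damping term \<open>\<phi>'/r\<close> is the only one that is not reflection invariant.
  Hence \<open>\<phi>' = 0\<close>, so \<open>\<rho>\<close> is a positive constant on \<open>(r\<^sub>0, r\<^sub>1)\<close>, which contradicts
  its continuity at \<open>r\<^sub>0\<close>, where it vanishes.\<close>

lemma C2_on_nonneg_DERIV:
  assumes "C2_on_nonneg f f1 f2" "x > 0"
  shows "(f has_real_derivative f1 x) (at x)" "(f1 has_real_derivative f2 x) (at x)"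
proof -
  have "at x within {0..} = at x"
    using \<open>x > 0\<close> by (intro at_within_interior) simp
  then show "(f has_real_derivative f1 x) (at x)" "(f1 has_real_derivative f2 x) (at x)"
    using assms unfolding C2_on_nonneg_def by (metis less_imp_le)+
qed

lemma DERIV_zero_greaterThanLessThan_constant:
  fixes f :: "real \<Rightarrow> real"
  assumes "\<And>x. x \<in> {a<..<b} \<Longrightarrow> (f has_real_derivative 0) (at x)"
  obtains c where "\<And>x. x \<in> {a<..<b} \<Longrightarrow> f x = c"
  using has_field_derivative_zero_constant[of "{a<..<b}" f] assms
  by (metis convex_real_interval(8) has_field_derivative_at_within)

lemma DERIV_reflection_symmetric:
  fixes f :: "real \<Rightarrow> real"
  assumes "open S" "x \<in> S"
    and sym: "\<And>t. t \<in> S \<Longrightarrow> f t = s * f (c - t)"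
    and f'_x: "(f has_real_derivative f' x) (at x)"
    and f'_mirror: "(f has_real_derivative f' (c - x)) (at (c - x))"
  shows "f' x = - s * f' (c - x)"
proof -
  have "((\<lambda>t. f (c - t)) has_real_derivative f' (c - x) * (0 - 1)) (at x)"
    by (rule DERIV_chain2[where g = "\<lambda>t. c - t", OF f'_mirror]) (auto intro!: derivative_eq_intros)
  then have "((\<lambda>t. s * f (c - t)) has_real_derivative s * (f' (c - x) * (0 - 1))) (at x)"
    by (rule DERIV_cmult)
  moreover have "((\<lambda>t. s * f (c - t)) has_real_derivative f' x) (at x)"
    by (rule has_field_derivative_transform_within_open[OF f'_x \<open>open S\<close> \<open>x \<in> S\<close> sym])
  ultimately show ?thesis
    using DERIV_unique by fastforce
qed

lemma radial_damping_mirror_zero: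
  fixes D p1 x y :: real
  assumes "D \<noteq> 0" "x > 0" "y > 0"
    and "D * p2 + D * p1 / x + q = 0" "D * p2 + D * (- p1) / y + q = 0"
  shows "p1 = 0"
proof -
  have "D * (- p1) / y = - (D * p1 / y)"
    by simp
  then have "D * p1 / x + D * p1 / y = 0"
    using assms(4,5) by linarith
  then have "D * (p1 * (1 / x + 1 / y)) = 0"
    by (simp add: algebra_simps)
  moreover have "1 / x + 1 / y > 0"
    using assms(2,3) by (simp add: add_pos_pos)
  ultimately show ?thesis
    using \<open>D \<noteq> 0\<close> by simp
qed

lemma continuous_at_right_eq_const:
  fixes f :: "real \<Rightarrow> real"
  assumes "continuous (at_right a) f" "a < b" "\<And>x. x \<in> {a<..<b} \<Longrightarrow> f x = k"
  shows "f a = k"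
proof -
  have "eventually (\<lambda>x. f x = k) (at_right a)"
    by (rule eventually_at_rightI[OF assms(3,2)])
  then have "(f \<longlongrightarrow> k) (at_right a)"
    by (rule tendsto_eventually)
  moreover have "(f \<longlongrightarrow> f a) (at_right a)"
    using assms(1) by (simp add: continuous_within)
  ultimately show ?thesis
    by (rule tendsto_unique[OF trivial_limit_at_right_real, rotated])
qed

lemma radial_ode_symmetric_solution_flat:
  fixes D a b r0 r1 :: real
  assumes "D \<noteq> 0" "0 \<le> r0" "C2_on_nonneg \<phi> \<phi>1 \<phi>2"
    and ode: "\<forall>r>0. D * \<phi>2 r + D * \<phi>1 r / r + a * \<rho> r - b * \<phi> r = 0"
    and \<rho>_sym: "\<And>r. r \<in> {r0<..<r1} \<Longrightarrow> \<rho> r = \<rho> (r0 + r1 - r)"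
    and \<phi>_sym: "\<And>r. r \<in> {r0<..<r1} \<Longrightarrow> \<phi> r = \<phi> (r0 + r1 - r)"
    and x: "x \<in> {r0<..<r1}"
  shows "\<phi>1 x = 0"
proof -
  have mirror: "r > 0" "r0 + r1 - r > 0" if "r \<in> {r0<..<r1}" for r
    using that \<open>0 \<le> r0\<close> by auto
  define y where "y = r0 + r1 - x"
  have "x > 0" "y > 0"
    using mirror[OF x] unfolding y_def by auto
  note \<phi>' = C2_on_nonneg_DERIV[OF \<open>C2_on_nonneg \<phi> \<phi>1 \<phi>2\<close>]
  have \<phi>1_odd: "\<phi>1 r = - \<phi>1 (r0 + r1 - r)" if r: "r \<in> {r0<..<r1}" for r
  proof -
    have "\<phi>1 r = - 1 * \<phi>1 (r0 + r1 - r)"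
    proof (rule DERIV_reflection_symmetric[OF open_greaterThanLessThan r])
      show "\<phi> t = 1 * \<phi> (r0 + r1 - t)" if "t \<in> {r0<..<r1}" for t
        using \<phi>_sym[OF that] by simp
    qed (use \<phi>'(1) mirror r in blast)+
    then show ?thesis by simp
  qed
  have "\<phi>2 x = - (- 1) * \<phi>2 (r0 + r1 - x)"
  proof (rule DERIV_reflection_symmetric[OF open_greaterThanLessThan x])
    show "\<phi>1 t = - 1 * \<phi>1 (r0 + r1 - t)" if "t \<in> {r0<..<r1}" for t
      using \<phi>1_odd[OF that] by simp
  qed (use \<phi>'(2) mirror x in blast)+
  then have "\<phi>2 x = \<phi>2 y"
    unfolding y_def by simp
  moreover have "\<rho> x = \<rho> y" "\<phi> x = \<phi> y" "\<phi>1 y = - \<phi>1 x"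
    using \<rho>_sym[OF x] \<phi>_sym[OF x] \<phi>1_odd[OF x] unfolding y_def by auto
  ultimately have at_y: "D * \<phi>2 x + D * (- \<phi>1 x) / y + (a * \<rho> x - b * \<phi> x) = 0"
    using ode[rule_format, OF \<open>y > 0\<close>] by simp
  have at_x: "D * \<phi>2 x + D * \<phi>1 x / x + (a * \<rho> x - b * \<phi> x) = 0"
    using ode[rule_format, OF \<open>x > 0\<close>] by simp
  show ?thesis
    by (rule radial_damping_mirror_zero[OF \<open>D \<noteq> 0\<close> \<open>x > 0\<close> \<open>y > 0\<close> at_x at_y])
qed

lemma flux_balance_DERIV:
  fixes eps chi :: real
  assumes "eps \<noteq> 0" "\<rho> r > 0" "(\<rho> has_real_derivative \<rho>1) (at r)"
    and "eps * \<rho> r * \<rho>1 = chi * \<rho> r * \<phi>1"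
  shows "(\<rho> has_real_derivative chi / eps * \<phi>1) (at r)"
proof -
  have "\<rho>1 = chi / eps * \<phi>1"
    using assms(1,2,4) by (simp add: field_simps)
  then show ?thesis
    using assms(3) by simp
qed

lemma no_symmetric_bump_steady_state:
  fixes D chi eps a b r0 r1 :: real
  assumes "D \<noteq> 0" "chi \<noteq> 0" "eps \<noteq> 0" "0 < r0" "r0 < r1"
    and "continuous_on {0..} \<rho>" "C2_on_nonneg \<phi> \<phi>1 \<phi>2" "\<rho> r0 = 0"
    and \<rho>_pos: "\<forall>r\<in>{r0<..<r1}. \<rho> r > 0"
    and \<rho>_sym: "\<forall>s\<in>{0<..<r1 - r0}. \<rho> (r0 + s) = \<rho> (r1 - s)"
    and flux: "\<forall>r\<in>{r0<..<r1}. (\<rho> has_real_derivative \<rho>1 r) (at r) \<and>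
                eps * \<rho> r * \<rho>1 r = chi * \<rho> r * \<phi>1 r"
    and ode: "\<forall>r>0. D * \<phi>2 r + D * \<phi>1 r / r + a * \<rho> r - b * \<phi> r = 0"
  shows False
proof -
  have \<phi>': "(\<phi> has_real_derivative \<phi>1 r) (at r)" if "r \<in> {r0<..<r1}" for r
    using C2_on_nonneg_DERIV(1)[OF assms(7)] that \<open>0 < r0\<close> by auto
  have \<rho>': "(\<rho> has_real_derivative chi / eps * \<phi>1 r) (at r)" if "r \<in> {r0<..<r1}" for r
    using flux \<rho>_pos that by (intro flux_balance_DERIV[OF \<open>eps \<noteq> 0\<close>]) auto
  have "((\<lambda>r. \<rho> r - chi / eps * \<phi> r) has_real_derivative 0) (at r)" if "r \<in> {r0<..<r1}" for r
    using \<rho>'[OF that] \<phi>'[OF that] \<open>eps \<noteq> 0\<close> by (auto intro!: derivative_eq_intros)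
  then obtain c where c: "\<And>r. r \<in> {r0<..<r1} \<Longrightarrow> \<rho> r - chi / eps * \<phi> r = c"
    by (rule DERIV_zero_greaterThanLessThan_constant) auto
  have \<rho>_mirror: "\<rho> r = \<rho> (r0 + r1 - r)" if "r \<in> {r0<..<r1}" for r
    using \<rho>_sym that by (auto dest: bspec[of _ _ "r - r0"] simp: algebra_simps)
  have \<phi>_mirror: "\<phi> r = \<phi> (r0 + r1 - r)" if "r \<in> {r0<..<r1}" for r
    using c[OF that] c[of "r0 + r1 - r"] \<rho>_mirror[OF that] that assms(2,3) by auto
  have "\<phi>1 r = 0" if "r \<in> {r0<..<r1}" for r
    using radial_ode_symmetric_solution_flat[OF \<open>D \<noteq> 0\<close> _ assms(7) ode \<rho>_mirror \<phi>_mirror that]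
      \<open>0 < r0\<close> by simp
  then have "(\<rho> has_real_derivative 0) (at r)" if "r \<in> {r0<..<r1}" for r
    using \<rho>'[OF that] that by simp
  then obtain k where k: "\<And>r. r \<in> {r0<..<r1} \<Longrightarrow> \<rho> r = k"
    by (rule DERIV_zero_greaterThanLessThan_constant) auto
  have "continuous (at_right r0) \<rho>"
    using assms(4,6) by (simp add: continuous_on_interior continuous_at_imp_continuous_within)
  then have "\<rho> r0 = k"
    by (rule continuous_at_right_eq_const[OF _ \<open>r0 < r1\<close> k])
  then have "k = 0"
    using \<open>\<rho> r0 = 0\<close> by simp
  moreover have "k > 0"
    using k[of "(r0 + r1) / 2"] \<rho>_pos \<open>r0 < r1\<close> by auto
  ultimately show False
    by simp
qed

theorem mainTheorem4:
  fixes D chi eps a \<beta> b :: real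
  assumes "D > 0" "chi > 0" "eps > 0" "a \<ge> 0" "\<beta> \<ge> 0" "b = D * \<beta>\<^sup>2"
  shows "\<not> (\<exists>r0 r1 (\<rho>::real\<Rightarrow>real) \<rho>1 (\<phi>::real\<Rightarrow>real) \<phi>1 \<phi>2.
            0 < r0 \<and> r0 < r1 \<and>
            continuous_on {0..} \<rho> \<and>
            C2_on_nonneg \<phi> \<phi>1 \<phi>2 \<and>
            (\<forall>r\<ge>0. \<rho> r \<ge> 0) \<and> \<phi> 0 \<ge> 0 \<and>
            (\<forall>r\<in>{0..r0} \<union> {r1..}. \<rho> r = 0) \<and>
            (\<forall>r\<in>{r0<..<r1}. \<rho> r > 0) \<and>
            (\<forall>s\<in>{0<..<r1 - r0}. \<rho> (r0 + s) = \<rho> (r1 - s)) \<and>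
            (\<forall>r\<in>{r0<..<r1}. (\<rho> has_real_derivative \<rho>1 r) (at r) \<and>
                eps * \<rho> r * \<rho>1 r = chi * \<rho> r * \<phi>1 r) \<and>
            (\<forall>r>0. D * \<phi>2 r + D * \<phi>1 r / r + a * \<rho> r - b * \<phi> r = 0))"
  by (intro notI, elim exE conjE, rule no_symmetric_bump_steady_state[of D chi eps])
    (use assms in \<open>auto\<close>)

end
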